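(* Let $X$ be a real Hilbert space, let $f:X\to\mathbb{R}\cup\{+\infty\}$ be a proper $\Phi_{lsc}$-convex function and $\bar x\in\mathrm{dom}(f)$. If there exist $\rho\ge 0$ and $\delta>0$ such that $f(x)\ge f(\bar x)-\rho\|x-\bar x\|^2$ for all $x$ with $\|x-\bar x\|<\delta$, then there exists $\bar\rho\ge 0$ such that $f(x)\ge f(\bar x)-\bar\rho\|x-\bar x\|^2$ for all $x\in X$.
   Context: $\Phi_{lsc}$ is the class of functions $\varphi:X\to\mathbb{R}$, $\varphi(x)=-a\|x\|^2+\langle v,x\rangle+c$ with $a\ge0$, $v\in X^*$, $c\in\mathbb{R}$. $\mathrm{supp}(f):=\{\varphi\in\Phi_{lsc}:\varphi\le f \text{ on } X\}$. $f$ is $\Phi_{lsc}$-convex if $f=\sup\{\varphi:\varphi\in\mathrm{supp}(f)\}$ pointwise. $f$ is proper if $\mathrm{supp}(f)\ne\emptyset$ and $\mathrm{dom}(f):=\{x:f(x)<+\infty\}\neq\emptyset$. *)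

theory Defs
  imports "HOL-Analysis.Analysis"
begin

definition Phi_lsc :: "('a::real_normed_vector \<Rightarrow> real) set" where
  "Phi_lsc = {\<phi>. \<exists>a l c. a \<ge> 0 \<and> bounded_linear l \<and>
                      (\<forall>x. \<phi> x = - a * (norm x)\<^sup>2 + l x + c)}"

definition supp :: "('a::real_normed_vector \<Rightarrow> ereal) \<Rightarrow> ('a \<Rightarrow> real) set" where
  "supp f = {\<phi> \<in> Phi_lsc. \<forall>x. ereal (\<phi> x) \<le> f x}"

definition Phi_lsc_convex :: "('a::real_normed_vector \<Rightarrow> ereal) \<Rightarrow> bool" where
  "Phi_lsc_convex f \<longleftrightarrow> (\<forall>x. f x = (SUP \<phi>\<in>supp f. ereal (\<phi> x)))"

definition edom :: "('a \<Rightarrow> ereal) \<Rightarrow> 'a set" where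
  "edom f = {x. f x < \<infinity>}"

definition proper_fun :: "('a::real_normed_vector \<Rightarrow> ereal) \<Rightarrow> bool" where
  "proper_fun f \<longleftrightarrow> supp f \<noteq> {} \<and> edom f \<noteq> {}"

end

theory Submission
  imports Defs
begin

text \<open>A single minorant \<open>\<phi> \<in> supp f\<close> decays at most quadratically, so outside the ball of
  radius \<open>\<delta>\<close> around \<open>xbar\<close> it already gives a quadratic lower bound for \<open>f\<close> with vertex
  \<open>(xbar, f xbar)\<close>; inside the ball the local hypothesis applies, and the larger of the two
  constants works everywhere.\<close>

lemma Phi_lsc_quadratic_lower_bound:
  assumes "\<phi> \<in> Phi_lsc"
  shows "\<exists>C\<ge>0. \<forall>x. \<phi> x \<ge> - C * (1 + (norm (x - x0))\<^sup>2)"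
proof -
  obtain a l c where a0: "a \<ge> 0" and bl: "bounded_linear l"
    and phi: "\<And>x. \<phi> x = - a * (norm x)\<^sup>2 + l x + c"
    using assms unfolding Phi_lsc_def by blast
  obtain K where K0: "K > 0" and Kb: "\<And>x. norm (l x) \<le> norm x * K"
    using bounded_linear.pos_bounded[OF bl] by blast
  define n where "n = norm x0"
  define m where "m = 2 * a * n\<^sup>2 + K * n + \<bar>c\<bar>"
  define C where "C = 2 * a + K + m"
  have m0: "m \<ge> 0" using a0 K0 unfolding m_def n_def by simp
  then have "C \<ge> 0" using a0 K0 unfolding C_def by simp
  moreover have "\<phi> x \<ge> - C * (1 + (norm (x - x0))\<^sup>2)" for x
  proof -
    define t where "t = norm (x - x0)"
    have t0: "t \<ge> 0" unfolding t_def by simp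
    have nx: "norm x \<le> t + n"
      unfolding t_def n_def by (metis diff_add_cancel norm_triangle_ineq)
    have "(norm x)\<^sup>2 \<le> (t + n)\<^sup>2" using nx by (intro power_mono) auto
    also have "\<dots> \<le> 2 * t\<^sup>2 + 2 * n\<^sup>2"
      using sum_squares_ge_zero[of "t - n" 0] by (simp add: power2_eq_square algebra_simps)
    finally have ax: "a * (norm x)\<^sup>2 \<le> a * (2 * t\<^sup>2 + 2 * n\<^sup>2)" using a0 by (intro mult_left_mono)
    have "2 * t \<le> 1 + t\<^sup>2"
      using sum_squares_ge_zero[of "t - 1" 0] by (simp add: power2_eq_square algebra_simps)
    then have "t \<le> 1 + t\<^sup>2" using t0 by linarith
    have "- l x \<le> norm x * K" using Kb[of x] by simp
    also have "\<dots> \<le> (t + n) * K" using nx K0 by (intro mult_right_mono) auto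
    also have "\<dots> \<le> K * (1 + t\<^sup>2) + K * n"
      using mult_left_mono[OF \<open>t \<le> 1 + t\<^sup>2\<close>, of K] K0 by (simp add: algebra_simps)
    finally have lx: "- l x \<le> K * (1 + t\<^sup>2) + K * n" .
    have "- \<phi> x \<le> 2 * a * t\<^sup>2 + K * (1 + t\<^sup>2) + m"
      using phi[of x] ax lx abs_ge_minus_self[of c] unfolding m_def by (simp add: algebra_simps)
    also have "\<dots> \<le> C * (1 + t\<^sup>2)"
      using a0 mult_nonneg_nonneg[OF m0, of "t\<^sup>2"] unfolding C_def by (simp add: algebra_simps)
    finally show ?thesis unfolding t_def by simp
  qed
  ultimately show ?thesis by blast
qed

lemma one_plus_square_le_scaled_square:
  fixes t \<delta> :: real
  assumes "0 < \<delta>" and "\<delta> \<le> t"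
  shows "1 + t\<^sup>2 \<le> (1 + 1 / \<delta>\<^sup>2) * t\<^sup>2"
proof -
  have "\<delta>\<^sup>2 \<le> t\<^sup>2" using assms by (intro power_mono) auto
  then have "1 \<le> t\<^sup>2 / \<delta>\<^sup>2" using assms by simp
  then show ?thesis by (simp add: algebra_simps)
qed

lemma minorant_quadratic_bound_off_ball:
  assumes "\<phi> \<in> Phi_lsc" and "\<And>x. ereal (\<phi> x) \<le> f x" and "0 < \<delta>"
  shows "\<exists>\<rho>\<ge>0. \<forall>x. \<delta> \<le> norm (x - x0) \<longrightarrow> f x \<ge> ereal r - ereal (\<rho> * (norm (x - x0))\<^sup>2)"
proof -
  obtain C where C0: "C \<ge> 0" and C: "\<And>x. \<phi> x \<ge> - C * (1 + (norm (x - x0))\<^sup>2)"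
    using Phi_lsc_quadratic_lower_bound[OF assms(1)] by blast
  define \<rho> where "\<rho> = (C + \<bar>r\<bar>) * (1 + 1 / \<delta>\<^sup>2)"
  have "\<rho> \<ge> 0" using C0 unfolding \<rho>_def by simp
  moreover have "f x \<ge> ereal r - ereal (\<rho> * (norm (x - x0))\<^sup>2)" if "\<delta> \<le> norm (x - x0)" for x
  proof -
    define t where "t = norm (x - x0)"
    have "(C + \<bar>r\<bar>) * (1 + t\<^sup>2) \<le> (C + \<bar>r\<bar>) * ((1 + 1 / \<delta>\<^sup>2) * t\<^sup>2)"
      using one_plus_square_le_scaled_square[OF assms(3) that[folded t_def]] C0
      by (intro mult_left_mono) auto
    then have "C * (1 + t\<^sup>2) + \<bar>r\<bar> * (1 + t\<^sup>2) \<le> \<rho> * t\<^sup>2"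
      unfolding \<rho>_def by (simp add: mult.assoc distrib_right)
    moreover have "r \<le> \<bar>r\<bar> * (1 + t\<^sup>2)"
      by (simp add: distrib_left add_increasing2)
    moreover have "- (C * (1 + t\<^sup>2)) \<le> \<phi> x" using C[of x] unfolding t_def by simp
    ultimately have "ereal (r - \<rho> * t\<^sup>2) \<le> ereal (\<phi> x)" by simp
    also have "\<dots> \<le> f x" by (fact assms(2))
    finally show ?thesis unfolding t_def by simp
  qed
  ultimately show ?thesis by blast
qed

theorem mainTheorem2:
  fixes f :: "'a::{real_inner, complete_space} \<Rightarrow> ereal" and xbar :: 'a
  assumes noninf: "\<forall>x. f x \<noteq> -\<infinity>"
    and proper: "proper_fun f"
    and conv: "Phi_lsc_convex f"
    and dom: "xbar \<in> edom f"
    and localbd: "\<exists>\<rho> \<delta>. \<rho> \<ge> 0 \<and> \<delta> > 0 \<and>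
       (\<forall>x. norm (x - xbar) < \<delta> \<longrightarrow> f x \<ge> f xbar - ereal (\<rho> * (norm (x - xbar))\<^sup>2))"
  shows "\<exists>\<rho>'. \<rho>' \<ge> 0 \<and> (\<forall>x. f x \<ge> f xbar - ereal (\<rho>' * (norm (x - xbar))\<^sup>2))"
proof -
  obtain \<rho> \<delta> where \<rho>: "\<rho> \<ge> 0" and \<delta>: "\<delta> > 0" and near:
    "\<And>x. norm (x - xbar) < \<delta> \<Longrightarrow> f x \<ge> f xbar - ereal (\<rho> * (norm (x - xbar))\<^sup>2)"
    using localbd by blast
  obtain r where r: "f xbar = ereal r"
    using dom noninf unfolding edom_def by (cases "f xbar") auto
  obtain \<phi> where "\<phi> \<in> supp f"
    using proper unfolding proper_fun_def by blast
  then have "\<phi> \<in> Phi_lsc" and "\<And>x. ereal (\<phi> x) \<le> f x"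
    unfolding supp_def by auto
  from minorant_quadratic_bound_off_ball[OF this \<delta>]
  obtain \<rho>\<^sub>f where "\<rho>\<^sub>f \<ge> 0" and far:
    "\<And>x. \<delta> \<le> norm (x - xbar) \<Longrightarrow> f x \<ge> ereal r - ereal (\<rho>\<^sub>f * (norm (x - xbar))\<^sup>2)"
    by blast
  have "f x \<ge> f xbar - ereal (max \<rho> \<rho>\<^sub>f * (norm (x - xbar))\<^sup>2)" for x
  proof (cases "norm (x - xbar) < \<delta>")
    case True
    show ?thesis by (rule order_trans[OF _ near[OF True]]) (simp add: r mult_right_mono)
  next
    case False
    then have "\<delta> \<le> norm (x - xbar)" by simp
    note far[OF this]
    then show ?thesis by (rule order_trans[rotated]) (simp add: r mult_right_mono)
  qed
  then show ?thesis using \<rho> by (intro exI[of _ "max \<rho> \<rho>\<^sub>f"]) auto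
qed

end
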